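(* Let $(\mathcal{C},\mathcal{B},Q,2)$ be a 2-seat STV election, counted by the procedure described in the context, with reported winners $w_1\neq w_2$. Suppose the procedure FindAuditableAssertions described in the context, run on recorded ballot data and an arbitrary real-valued cost function, does not abort and returns a set $\mathcal{A}$ of assertions. If every assertion in $\mathcal{A}$ holds for the ballots $\mathcal{B}$, then $\mathcal{A}$ rules out every alternate election result: no $2$-element set $\{c_1,c_2\}\subseteq\mathcal{C}$ with $\{c_1,c_2\}\neq\{w_1,w_2\}$ is the set of seated candidates.
   Context: An STV election is a tuple $(\mathcal{C},\mathcal{B},Q,S)$ where $\mathcal{C}$ is a finite set of candidates, $\mathcal{B}$ is a multiset of ballots (each ballot is a finite sequence of distinct candidates, in order of preference, most preferred first, not necessarily containing all candidates), $S$ is the number of seats, and $Q=\lfloor |\mathcal{B}|/(S+1)\rfloor+1$ is the quota. For a sequence $\pi$, $\mathrm{first}(\pi)$ is its first element, and for a set $X$ of candidates, $\sigma_X(\pi)$ is the subsequence of $\pi$ consisting of the elements of $X$, in order. Counting: every ballot starts with value $1$ in the pile of its first-ranked candidate; a candidate's tally is the total value of the ballots in its pile; a candidate is eligible if neither eliminated nor seated. In each round every eligible candidate with tally at least $Q$ is seated (gets a quota) and every ballot in its pile is given the transfer value $(V_c-Q)/|\mathcal{B}_c|$ (unweighted Gregory method; $V_c$ is the total value, $|\mathcal{B}_c|$ the number of ballots in the pile) and moved to the next-ranked eligible candidate on the ballot (or exhausted). If no candidate reaches a quota, the eligible candidate with smallest tally is eliminated and its ballots move at their current value to their next-ranked eligible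 candidate (or are exhausted). Counting stops when all $S$ seats are filled or the number of eligible candidates equals the number of unfilled seats, in which case all remaining eligible candidates are seated. Quantities (counts with multiplicity, computed from a given ballot multiset): $L_{\mathrm{basic}}(c)=|\{\beta:\mathrm{first}(\beta)=c\}|$; $U_{\mathrm{comp}}(c,c')=|\{\beta:\mathrm{first}(\sigma_{\{c,c'\}}(\beta))=c\}|$; $L_{\mathrm{elim}}(w,O)=|\{\beta:\mathrm{first}(\sigma_{\mathcal{C}\setminus O}(\beta))=w\}|$; for $W\subseteq\mathcal{C}$, distinct $c,b\notin W$, reals $\overline{\tau}=(\overline{\tau}_v)_{v\in W}$ and $G\subseteq\mathcal{C}$, $U_{\mathrm{complex}}(c,b,W,\overline{\tau},G)=\sum_\beta u(\beta)$ with $u(\beta)$ given by the first applicable case: $0$ if some $g\in G\setminus W$ has $\mathrm{first}(\sigma_{\{g,c\}}(\beta))=g$; $0$ if $c$ does not occur in $\beta$; $0$ if $\mathrm{first}(\sigma_{\{b,c\}}(\beta))=b$; $\max\{\overline{\tau}_v:v\in W, v\text{ precedes }c\text{ in }\beta\}$ if $\mathrm{first}(\beta)\in W$; $1$ otherwise. Assertions: $\mathsf{AG}(x,y)$ means $L_{\mathrm{basic}}(x)>U_{\mathrm{comp}}(y,x)$; $\mathsf{NL}(w,l,W,\overline{\tau},G,O)$ means $L_{\mathrm{elim}}(w,O)>U_{\mathrm{complex}}(l,w,W,\overline{\tau},G)$. An assertion "holds for $\mathcal{B}$" if its inequality is true when the quantities are computed from $\mathcal{B}$. Procedure (quantities inside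 it are computed from the recorded ballot data, which may differ from $\mathcal{B}$): NonWinners computes $AG_{\mathrm{rec}}=\{(x,y): x\neq y,\ \mathsf{AG}(x,y)\text{ holds for the recorded data}\}$, the set $NW$ of candidates $c$ with at least two distinct $x$ such that $(x,c)\in AG_{\mathrm{rec}}$, and for each $c\in NW$ two assertions $\mathsf{AG}(x_1,c),\mathsf{AG}(x_2,c)$ with $x_1\neq x_2$ and $(x_1,c),(x_2,c)\in AG_{\mathrm{rec}}$ (chosen to minimise the cost); these form the initial $\mathcal{A}$. Then for every unordered pair $\{c_1,c_2\}$ of distinct candidates with $\{c_1,c_2\}\neq\{w_1,w_2\}$ and $\{c_1,c_2\}\cap NW=\emptyset$, the procedure considers all $o\in\mathcal{C}\setminus\{c_1,c_2\}$ and both orderings $(x,y)\in\{(c_1,c_2),(c_2,c_1)\}$, with $O_o=\{o':(o,o')\in AG_{\mathrm{rec}}\}$ and $G_y=\{g:(g,y)\in AG_{\mathrm{rec}}\}$, and keeps those for which $\mathsf{NL}(o,y,\{x\},\overline{\tau},G_y,O_o\setminus\{x\})$ with $\overline{\tau}_x=2/3$ holds for the recorded data; if there are none it aborts, otherwise it picks one such choice (of minimal cost) and adds to $\mathcal{A}$ the assertions $\mathsf{NL}(o,y,\{x\},\overline{\tau},G_y,O_o\setminus\{x\})$ (with $\overline{\tau}_x=2/3$), $\mathsf{AG}(o,o')$ for all $o'\in O_o$, and $\mathsf{AG}(g,y)$ for all $g\in G_y$. Finally it returns $\mathcal{A}$. *)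

theory Defs
  imports Complex_Main "HOL-Library.Multiset"
begin

text \<open>A ballot is a finite list of distinct candidates (most preferred first).
  A multiset of ballots models the ballot multiset.\<close>

definition valid_ballots :: "'c set \<Rightarrow> 'c list multiset \<Rightarrow> bool" where
  "valid_ballots C B \<longleftrightarrow> (\<forall>\<beta>\<in>#B. distinct \<beta> \<and> set \<beta> \<subseteq> C)"

definition first :: "'c list \<Rightarrow> 'c option" where
  "first \<beta> = (case \<beta> of [] \<Rightarrow> None | x # _ \<Rightarrow> Some x)"

definition sigma :: "'c set \<Rightarrow> 'c list \<Rightarrow> 'c list" where
  "sigma X \<beta> = filter (\<lambda>x. x \<in> X) \<beta>"

definition precedes :: "'c \<Rightarrow> 'c \<Rightarrow> 'c list \<Rightarrow> bool" where
  "precedes v c \<beta> \<longleftrightarrow> (\<exists>i j. i < j \<and> j < length \<beta> \<and> \<beta> ! i = v \<and> \<beta> ! j = c)"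

definition quota :: "'c list multiset \<Rightarrow> nat \<Rightarrow> nat" where
  "quota B S = size B div (S + 1) + 1"

text \<open>A counting state: seated candidates, eliminated candidates, and for each
  ballot (with multiplicity) its current value and the pile it is in
  (None = exhausted).\<close>
datatype 'c stv_state =
  St (seated: "'c set") (elim: "'c set") (piles: "('c list \<times> real \<times> 'c option) multiset")

definition eligible :: "'c set \<Rightarrow> 'c stv_state \<Rightarrow> 'c set" where
  "eligible C s = C - seated s - elim s"

definition tally :: "('c list \<times> real \<times> 'c option) multiset \<Rightarrow> 'c \<Rightarrow> real" where
  "tally M c = sum_mset (image_mset (\<lambda>(\<beta>, v, p). v) (filter_mset (\<lambda>(\<beta>, v, p). p = Some c) M))"

definition pile_size :: "('c list \<times> real \<times> 'c option) multiset \<Rightarrow> 'c \<Rightarrow> nat" where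
  "pile_size M c = size (filter_mset (\<lambda>(\<beta>, v, p). p = Some c) M)"

definition next_pref :: "'c set \<Rightarrow> 'c list \<Rightarrow> 'c \<Rightarrow> 'c option" where
  "next_pref E \<beta> c = find (\<lambda>x. x \<in> E) (tl (dropWhile (\<lambda>x. x \<noteq> c) \<beta>))"

definition initial_state :: "'c list multiset \<Rightarrow> 'c stv_state" where
  "initial_state B = St {} {} (image_mset (\<lambda>\<beta>. (\<beta>, 1, first \<beta>)) B)"

definition stopped :: "'c set \<Rightarrow> nat \<Rightarrow> 'c stv_state \<Rightarrow> bool" where
  "stopped C S s \<longleftrightarrow> S \<le> card (seated s) \<or> card (eligible C s) = S - card (seated s)"

text \<open>Seating round: every candidate of X (the eligible candidates with tally
  at least the quota) is seated; the ballots in its pile get the unweighted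
  Gregory transfer value and move to the next-ranked eligible candidate.\<close>
definition seat_transfer ::
  "'c set \<Rightarrow> 'c set \<Rightarrow> real \<Rightarrow> ('c list \<times> real \<times> 'c option) multiset
    \<Rightarrow> ('c list \<times> real \<times> 'c option) multiset" where
  "seat_transfer E' X Q M = image_mset (\<lambda>(\<beta>, v, p). case p of
       Some c \<Rightarrow> if c \<in> X then (\<beta>, (tally M c - Q) / real (pile_size M c), next_pref E' \<beta> c)
                 else (\<beta>, v, p)
     | None \<Rightarrow> (\<beta>, v, p)) M"

definition elim_transfer ::
  "'c set \<Rightarrow> 'c \<Rightarrow> ('c list \<times> real \<times> 'c option) multiset
    \<Rightarrow> ('c list \<times> real \<times> 'c option) multiset" where
  "elim_transfer E' e M = image_mset (\<lambda>(\<beta>, v, p).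
       if p = Some e then (\<beta>, v, next_pref E' \<beta> e) else (\<beta>, v, p)) M"

text \<open>One round of counting (ties for elimination are broken arbitrarily).\<close>
inductive stv_step :: "'c set \<Rightarrow> real \<Rightarrow> nat \<Rightarrow> 'c stv_state \<Rightarrow> 'c stv_state \<Rightarrow> bool"
  for C Q S where
  seat: "\<not> stopped C S s \<Longrightarrow> X = {c \<in> eligible C s. tally (piles s) c \<ge> Q} \<Longrightarrow> X \<noteq> {} \<Longrightarrow>
     stv_step C Q S s (St (seated s \<union> X) (elim s) (seat_transfer (eligible C s - X) X Q (piles s)))"
| elim: "\<not> stopped C S s \<Longrightarrow> \<forall>c \<in> eligible C s. tally (piles s) c < Q \<Longrightarrow>
     e \<in> eligible C s \<Longrightarrow> \<forall>c \<in> eligible C s. tally (piles s) e \<le> tally (piles s) c \<Longrightarrow>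
     stv_step C Q S s (St (seated s) (elim s \<union> {e}) (elim_transfer (eligible C s - {e}) e (piles s)))"

definition stv_result :: "'c set \<Rightarrow> 'c list multiset \<Rightarrow> nat \<Rightarrow> 'c set \<Rightarrow> bool" where
  "stv_result C B S W \<longleftrightarrow> (\<exists>s. (stv_step C (real (quota B S)) S)\<^sup>*\<^sup>* (initial_state B) s \<and>
      stopped C S s \<and>
      W = (if S \<le> card (seated s) then seated s else seated s \<union> eligible C s))"

definition L_basic :: "'c list multiset \<Rightarrow> 'c \<Rightarrow> nat" where
  "L_basic B c = size (filter_mset (\<lambda>\<beta>. first \<beta> = Some c) B)"

definition U_comp :: "'c list multiset \<Rightarrow> 'c \<Rightarrow> 'c \<Rightarrow> nat" where
  "U_comp B c c' = size (filter_mset (\<lambda>\<beta>. first (sigma {c, c'} \<beta>) = Some c) B)"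

definition L_elim :: "'c set \<Rightarrow> 'c list multiset \<Rightarrow> 'c \<Rightarrow> 'c set \<Rightarrow> nat" where
  "L_elim C B w Os = size (filter_mset (\<lambda>\<beta>. first (sigma (C - Os) \<beta>) = Some w) B)"

definition u_complex :: "'c \<Rightarrow> 'c \<Rightarrow> 'c set \<Rightarrow> ('c \<Rightarrow> real) \<Rightarrow> 'c set \<Rightarrow> 'c list \<Rightarrow> real" where
  "u_complex c b W \<tau> G \<beta> =
     (if \<exists>g \<in> G - W. first (sigma {g, c} \<beta>) = Some g then 0
      else if c \<notin> set \<beta> then 0
      else if first (sigma {b, c} \<beta>) = Some b then 0
      else if (\<exists>v \<in> W. first \<beta> = Some v) then Max (\<tau> ` {v \<in> W. precedes v c \<beta>})
      else 1)"

definition U_complex :: "'c list multiset \<Rightarrow> 'c \<Rightarrow> 'c \<Rightarrow> 'c set \<Rightarrow> ('c \<Rightarrow> real) \<Rightarrow> 'c set \<Rightarrow> real" where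
  "U_complex B c b W \<tau> G = sum_mset (image_mset (u_complex c b W \<tau> G) B)"

datatype 'c assertion =
    AG 'c 'c
  | NL 'c 'c "'c set" "'c \<Rightarrow> real" "'c set" "'c set"

fun holds :: "'c set \<Rightarrow> 'c list multiset \<Rightarrow> 'c assertion \<Rightarrow> bool" where
  "holds C B (AG x y) \<longleftrightarrow> L_basic B x > U_comp B y x"
| "holds C B (NL w l W \<tau> G Os) \<longleftrightarrow> real (L_elim C B w Os) > U_complex B l w W \<tau> G"

definition AG_rec :: "'c set \<Rightarrow> 'c list multiset \<Rightarrow> ('c \<times> 'c) set" where
  "AG_rec C R = {(x, y). x \<in> C \<and> y \<in> C \<and> x \<noteq> y \<and> holds C R (AG x y)}"

definition NW :: "'c set \<Rightarrow> 'c list multiset \<Rightarrow> 'c set" where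
  "NW C R = {c \<in> C. \<exists>x1 x2. x1 \<noteq> x2 \<and> (x1, c) \<in> AG_rec C R \<and> (x2, c) \<in> AG_rec C R}"

definition NW_choices :: "'c set \<Rightarrow> 'c list multiset \<Rightarrow> 'c \<Rightarrow> 'c assertion set set" where
  "NW_choices C R c = {{AG x1 c, AG x2 c} | x1 x2.
      x1 \<noteq> x2 \<and> (x1, c) \<in> AG_rec C R \<and> (x2, c) \<in> AG_rec C R}"

definition pairs_to_check :: "'c set \<Rightarrow> 'c list multiset \<Rightarrow> 'c \<Rightarrow> 'c \<Rightarrow> 'c set set" where
  "pairs_to_check C R w1 w2 = {{c1, c2} | c1 c2. c1 \<in> C \<and> c2 \<in> C \<and> c1 \<noteq> c2 \<and>
      {c1, c2} \<noteq> {w1, w2} \<and> {c1, c2} \<inter> NW C R = {}}"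

definition O_set :: "'c set \<Rightarrow> 'c list multiset \<Rightarrow> 'c \<Rightarrow> 'c set" where
  "O_set C R oc = {o'. (oc, o') \<in> AG_rec C R}"

definition G_set :: "'c set \<Rightarrow> 'c list multiset \<Rightarrow> 'c \<Rightarrow> 'c set" where
  "G_set C R y = {g. (g, y) \<in> AG_rec C R}"

text \<open>the transfer-value bound vector: \<tau>_x = 2/3 (only the value at x matters, W = {x})\<close>
definition tau23 :: "'c \<Rightarrow> real" where
  "tau23 = (\<lambda>_. 2 / 3)"

definition pair_choices :: "'c set \<Rightarrow> 'c list multiset \<Rightarrow> 'c set \<Rightarrow> 'c assertion set set" where
  "pair_choices C R P = {{NL oc y {x} tau23 (G_set C R y) (O_set C R oc - {x})}
        \<union> {AG oc o' | o'. o' \<in> O_set C R oc} \<union> {AG g y | g. g \<in> G_set C R y} | oc x y.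
      x \<in> P \<and> y \<in> P \<and> x \<noteq> y \<and> oc \<in> C - P \<and>
      holds C R (NL oc y {x} tau23 (G_set C R y) (O_set C R oc - {x}))}"

text \<open>FindAuditableAssertions run on recorded data R with cost function cost
  does not abort and returns A (choices of minimal cost; ties arbitrary).\<close>
definition find_auditable_assertions ::
  "'c set \<Rightarrow> 'c list multiset \<Rightarrow> 'c \<Rightarrow> 'c \<Rightarrow> ('c assertion set \<Rightarrow> real) \<Rightarrow> 'c assertion set \<Rightarrow> bool" where
  "find_auditable_assertions C R w1 w2 cost A \<longleftrightarrow>
     (\<forall>P \<in> pairs_to_check C R w1 w2. pair_choices C R P \<noteq> {}) \<and>
     (\<exists>chNW chP.
        (\<forall>c \<in> NW C R. chNW c \<in> NW_choices C R c \<and>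
            (\<forall>X \<in> NW_choices C R c. cost (chNW c) \<le> cost X)) \<and>
        (\<forall>P \<in> pairs_to_check C R w1 w2. chP P \<in> pair_choices C R P \<and>
            (\<forall>X \<in> pair_choices C R P. cost (chP P) \<le> cost X)) \<and>
        A = (\<Union>c \<in> NW C R. chNW c) \<union> (\<Union>P \<in> pairs_to_check C R w1 w2. chP P))"

end

theory Submission
  imports Defs
begin

text \<open>Along every run of the count each ballot record sits in the pile of the first eligible
  candidate on its ballot, keeps value 1 until a seated candidate precedes that candidate on the
  ballot, and carries at most \<open>S/(S+1)\<close> once its first preference is seated (the quota exceeds
  \<open>|B|/(S+1)\<close>). Hence, while \<open>x\<close> is eligible, \<open>L_basic x\<close> bounds the tally of \<open>x\<close> from below
  and \<open>U_comp y x\<close> the tally of \<open>y\<close> from above, so \<open>AG x y\<close> keeps \<open>y\<close> strictly behind \<open>x\<close>: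
  \<open>y\<close> is never seated before \<open>x\<close>, and \<open>x\<close> is not eliminated while \<open>y\<close> is eligible. A
  candidate beaten in this sense by two others is never among the two winners.

  For a remaining pair \<open>{x, y}\<close>, the assertion \<open>NL o y\<close> says that a lower bound on the tally of
  \<open>o\<close> once the candidates of \<open>O\<close> are gone exceeds an upper bound on the tally of \<open>y\<close> while \<open>o\<close>
  is eligible and \<open>x\<close> is not eliminated. So \<open>o\<close> is never eliminated, and after \<open>y\<close> is seated
  \<open>o\<close> holds more than a quota of full-value ballots. If both \<open>x\<close> and \<open>y\<close> are seated, this
  contradicts the fact that only \<open>|B| - 2Q < Q\<close> of the value is left; otherwise \<open>o\<close> is still
  eligible at the end and hence among the winners.\<close>

lemma find_Some_split:
  "find P xs = Some a \<longleftrightarrow> (\<exists>pre post. xs = pre @ a # post \<and> (\<forall>z\<in>set pre. \<not> P z) \<and> P a)"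
proof
  show "find P xs = Some a \<Longrightarrow> \<exists>pre post. xs = pre @ a # post \<and> (\<forall>z\<in>set pre. \<not> P z) \<and> P a"
  proof (induction xs)
    case (Cons b xs)
    show ?case
    proof (cases "P b")
      case True
      with Cons.prems show ?thesis by (intro exI[of _ "[]"] exI[of _ xs]) auto
    next
      case False
      with Cons obtain pre post where "xs = pre @ a # post" "\<forall>z\<in>set pre. \<not> P z" "P a" by auto
      with False show ?thesis by (intro exI[of _ "b # pre"] exI[of _ post]) auto
    qed
  qed simp
next
  assume "\<exists>pre post. xs = pre @ a # post \<and> (\<forall>z\<in>set pre. \<not> P z) \<and> P a"
  then obtain pre post where "xs = pre @ a # post" "\<forall>z\<in>set pre. \<not> P z" "P a" by blast
  then show "find P xs = Some a" by (induction pre arbitrary: xs) auto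
qed

lemma find_append_skip: "\<forall>z\<in>set pre. \<not> P z \<Longrightarrow> find P (pre @ xs) = find P xs"
  by (induction pre) auto

lemma find_restrict:
  assumes "\<And>z. Q z \<Longrightarrow> P z" and "\<And>z. find P xs = Some z \<Longrightarrow> Q z"
  shows "find Q xs = find P xs"
proof (cases "find P xs")
  case None
  with assms(1) show ?thesis by (metis find_None_iff)
next
  case (Some z)
  then obtain pre post where "xs = pre @ z # post" "\<forall>z\<in>set pre. \<not> P z"
    using find_Some_split by metis
  with assms Some show ?thesis by (metis find_Some_split)
qed

lemma find_mem_takeWhile:
  assumes "find P xs = Some c" "\<not> Q c" "\<And>z. Q z \<Longrightarrow> P z"
  shows "c \<in> set (takeWhile (\<lambda>z. \<not> Q z) xs)"
proof -
  obtain pre post where "xs = pre @ c # post" "\<forall>z\<in>set pre. \<not> P z"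
    using assms(1) find_Some_split by metis
  moreover have "\<forall>z\<in>set pre. \<not> Q z" using calculation(2) assms(3) by blast
  ultimately show ?thesis using assms(2) by (simp add: takeWhile_append2)
qed

lemma takeWhile_set_mono:
  "(\<And>z. P z \<Longrightarrow> Q z) \<Longrightarrow> set (takeWhile P xs) \<subseteq> set (takeWhile Q xs)"
  by (induction xs) auto

lemma first_filter: "first (filter P xs) = find P xs"
  by (induction xs) (auto simp: first_def)

lemma first_sigma: "first (sigma X \<beta>) = find (\<lambda>z. z \<in> X) \<beta>"
  unfolding sigma_def by (rule first_filter)

lemma first_eq_find: "set \<beta> \<subseteq> X \<Longrightarrow> first \<beta> = find (\<lambda>z. z \<in> X) \<beta>"
  unfolding first_def by (cases \<beta>) auto

lemma next_pref_eq_find: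
  assumes "find (\<lambda>z. z \<in> E) \<beta> = Some c" "E' \<subseteq> E" "c \<notin> E'"
  shows "next_pref E' \<beta> c = find (\<lambda>z. z \<in> E') \<beta>"
proof -
  obtain pre post where \<beta>: "\<beta> = pre @ c # post" "\<forall>z\<in>set pre. z \<notin> E" "c \<in> E"
    using assms(1) find_Some_split by metis
  then have "c \<notin> set pre" by blast
  then have "dropWhile (\<lambda>x. x \<noteq> c) (pre @ c # post) = c # post"
    by (subst dropWhile_append2) auto
  with \<beta>(1) have "tl (dropWhile (\<lambda>x. x \<noteq> c) \<beta>) = post" by simp
  moreover have "find (\<lambda>z. z \<in> E') \<beta> = find (\<lambda>z. z \<in> E') post"
  proof -
    have "\<forall>z\<in>set (pre @ [c]). z \<notin> E'" using \<beta> assms(2,3) by auto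
    then show ?thesis using \<beta>(1) find_append_skip[of "pre @ [c]" _ post] by simp
  qed
  ultimately show ?thesis unfolding next_pref_def by simp
qed

lemma tally_add_mset [simp]:
  "tally (add_mset (\<beta>, v, p) M) c = (if p = Some c then v else 0) + tally M c"
  unfolding tally_def by auto

lemma pile_size_add_mset [simp]:
  "pile_size (add_mset (\<beta>, v, p) M) c = (if p = Some c then 1 else 0) + pile_size M c"
  unfolding pile_size_def by auto

lemma tally_empty [simp]: "tally {#} c = 0" and pile_size_empty [simp]: "pile_size {#} c = 0"
  unfolding tally_def pile_size_def by simp_all

definition total_value :: "('c list \<times> real \<times> 'c option) multiset \<Rightarrow> real" where
  "total_value M = sum_mset (image_mset (\<lambda>(\<beta>, v, p). v) M)"

lemma total_value_simps [simp]:
  "total_value {#} = 0" "total_value (add_mset (\<beta>, v, p) M) = v + total_value M"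
  unfolding total_value_def by simp_all

lemma tally_le_sum:
  assumes "\<forall>(\<beta>, v, p)\<in>#M. p = Some c \<longrightarrow> v \<le> f \<beta>" "\<forall>(\<beta>, v, p)\<in>#M. 0 \<le> f \<beta>"
  shows "tally M c \<le> sum_mset (image_mset f (image_mset fst M))"
  using assms by (induction M) (auto 4 3 intro: add_mono)

lemma tally_le_pile_size:
  "\<forall>(\<beta>, v, p)\<in>#M. v \<le> 1 \<Longrightarrow> tally M c \<le> real (pile_size M c)"
  by (induction M) (auto intro: add_mono)

lemma pile_size_le_size: "pile_size M c \<le> size M"
  unfolding pile_size_def by (rule size_filter_mset_lesseq)

lemma count_le_tally:
  assumes "\<forall>(\<beta>, v, p)\<in>#M. p = Some c \<longrightarrow> 0 \<le> v" "\<forall>(\<beta>, v, p)\<in>#M. P \<beta> \<longrightarrow> p = Some c \<and> v = 1"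
  shows "real (size (filter_mset P (image_mset fst M))) \<le> tally M c"
  using assms by (induction M) (auto intro: add_mono)

lemma count_le_total_value:
  assumes "\<forall>(\<beta>, v, p)\<in>#M. 0 \<le> v" "\<forall>(\<beta>, v, p)\<in>#M. P \<beta> \<longrightarrow> v = 1"
  shows "real (size (filter_mset P (image_mset fst M))) \<le> total_value M"
  using assms by (induction M) (auto intro: add_mono)

lemma sum_mset_indicator:
  "sum_mset (image_mset (\<lambda>b. if P b then 1 else 0) M) = real (size (filter_mset P M))"
  by (induction M) auto

lemma total_value_revalue:
  assumes "finite X"
  shows "sum_mset (image_mset (\<lambda>(\<beta>, v, p). if p \<in> Some ` X then t (the p) else v) M)
       = total_value M + (\<Sum>c\<in>X. real (pile_size M c) * t c - tally M c)"
proof (induction M)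
  case (add r M)
  obtain \<beta> v p where r: "r = (\<beta>, v, p)" by (cases r)
  have "(\<Sum>c\<in>X. real (pile_size (add_mset r M) c) * t c - tally (add_mset r M) c)
      = (\<Sum>c\<in>X. real (pile_size M c) * t c - tally M c) + (\<Sum>c\<in>X. if p = Some c then t c - v else 0)"
    unfolding r sum.distrib[symmetric] by (intro sum.cong) (auto simp: algebra_simps)
  moreover have "(\<Sum>c\<in>X. if p = Some c then t c - v else 0) = (if p \<in> Some ` X then t (the p) - v else 0)"
    using assms by (cases "p \<in> Some ` X") (auto simp: sum.delta' intro!: sum.neutral)
  ultimately show ?case using add.IH r by auto
qed simp

section \<open>The counting invariant\<close>

text \<open>The last two clauses are what make \<open>L_elim\<close> and \<open>U_complex\<close> sound bounds on tallies.\<close>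

definition record_ok :: "nat \<Rightarrow> 'c set \<Rightarrow> 'c set \<Rightarrow> 'c list \<times> real \<times> 'c option \<Rightarrow> bool" where
  "record_ok S E Se r \<longleftrightarrow> (case r of (\<beta>, v, p) \<Rightarrow>
     p = find (\<lambda>z. z \<in> E) \<beta> \<and> 0 \<le> v \<and> v \<le> 1 \<and>
     (v \<noteq> 1 \<longrightarrow> (\<exists>c\<in>set (takeWhile (\<lambda>z. z \<notin> E) \<beta>). c \<in> Se)) \<and>
     (\<forall>c. first \<beta> = Some c \<and> c \<in> Se \<longrightarrow> v \<le> real S / (real S + 1)))"

lemma record_ok_first_eligible:
  assumes "record_ok S E Se (\<beta>, v, p)" "first \<beta> = Some x" "x \<in> E"
  shows "p = Some x \<and> v = 1"
proof -
  obtain r where "\<beta> = x # r" using assms(2) unfolding first_def by (cases \<beta>) auto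
  with assms show ?thesis unfolding record_ok_def by auto
qed

lemma record_ok_pile_precedes:
  assumes "record_ok S E Se (\<beta>, v, Some y)" "z \<in> E"
  shows "first (sigma {y, z} \<beta>) = Some y"
proof -
  have "find (\<lambda>z. z \<in> E) \<beta> = Some y" using assms(1) unfolding record_ok_def by simp
  then obtain pre post where "\<beta> = pre @ y # post" "\<forall>z\<in>set pre. z \<notin> E" "y \<in> E"
    using find_Some_split by metis
  with assms(2) have "\<forall>x\<in>set pre. x \<notin> {y, z}" by auto
  with \<open>\<beta> = pre @ y # post\<close> show ?thesis
    unfolding first_sigma by (intro find_Some_split[THEN iffD2]) auto
qed

lemma record_ok_unmoved:
  assumes ok: "record_ok S E Se (\<beta>, v, p)" and "E' \<subseteq> E" "Se \<subseteq> Se'" "Se' - Se \<subseteq> E - E'"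
    and unmoved: "\<forall>c\<in>E - E'. p \<noteq> Some c"
  shows "record_ok S E' Se' (\<beta>, v, p)"
proof -
  have p: "p = find (\<lambda>z. z \<in> E) \<beta>" using ok unfolding record_ok_def by simp
  have "find (\<lambda>z. z \<in> E') \<beta> = p"
    unfolding p using assms(2) unmoved p by (intro find_restrict) (auto dest: find_Some_split[THEN iffD1])
  moreover have "set (takeWhile (\<lambda>z. z \<notin> E) \<beta>) \<subseteq> set (takeWhile (\<lambda>z. z \<notin> E') \<beta>)"
    using assms(2) by (intro takeWhile_set_mono) auto
  moreover have "v \<le> real S / (real S + 1)" if "first \<beta> = Some c" "c \<in> Se'" for c
  proof (cases "c \<in> Se")
    case False
    with assms(4) that have "c \<in> E - E'" by auto
    with record_ok_first_eligible[OF ok that(1)] unmoved show ?thesis by auto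
  qed (use ok that in \<open>auto simp: record_ok_def\<close>)
  ultimately show ?thesis using ok assms(3) unfolding record_ok_def by auto
qed

lemma record_ok_elim_moved:
  assumes ok: "record_ok S E Se (\<beta>, v, Some e)" and "E' \<subseteq> E" "e \<notin> E'"
  shows "record_ok S E' Se (\<beta>, v, next_pref E' \<beta> e)"
proof -
  have "next_pref E' \<beta> e = find (\<lambda>z. z \<in> E') \<beta>"
    using ok assms(2,3) by (intro next_pref_eq_find) (auto simp: record_ok_def)
  moreover have "set (takeWhile (\<lambda>z. z \<notin> E) \<beta>) \<subseteq> set (takeWhile (\<lambda>z. z \<notin> E') \<beta>)"
    using assms(2) by (intro takeWhile_set_mono) auto
  ultimately show ?thesis using ok unfolding record_ok_def by auto
qed

lemma record_ok_seat_moved: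
  assumes ok: "record_ok S E Se (\<beta>, v, Some c)" and "E' \<subseteq> E" "c \<notin> E'" "c \<in> Se'"
    and "0 \<le> t" "t \<le> real S / (real S + 1)"
  shows "record_ok S E' Se' (\<beta>, t, next_pref E' \<beta> c)"
proof -
  have c: "find (\<lambda>z. z \<in> E) \<beta> = Some c" using ok unfolding record_ok_def by simp
  have "real S / (real S + 1) \<le> 1" by (simp add: divide_le_eq)
  with assms(6) have "t \<le> 1" by linarith
  moreover have "c \<in> set (takeWhile (\<lambda>z. z \<notin> E') \<beta>)"
    using find_mem_takeWhile[OF c, of "\<lambda>z. z \<in> E'"] assms(2,3) by auto
  ultimately show ?thesis
    using next_pref_eq_find[OF c assms(2,3)] assms(4-6) unfolding record_ok_def by auto
qed

lemma quota_bounds: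
  "1 \<le> real (quota B S)" "real (size B) < (real S + 1) * real (quota B S)"
proof -
  have "size B = (S + 1) * (size B div (S + 1)) + size B mod (S + 1)" by (rule mult_div_mod_eq[symmetric])
  moreover have "size B mod (S + 1) < S + 1" by simp
  ultimately have "size B < (S + 1) * (size B div (S + 1)) + (S + 1)" by linarith
  then have "size B < (S + 1) * (size B div (S + 1) + 1)" by (simp add: algebra_simps)
  then show "real (size B) < (real S + 1) * real (quota B S)"
    unfolding quota_def by (metis of_nat_Suc of_nat_less_iff of_nat_mult Suc_eq_plus1 add.commute)
qed (simp add: quota_def)

lemma transfer_value_bounds:
  assumes "\<forall>(\<beta>, v, p)\<in>#M. v \<le> 1" "1 \<le> Q" "real (size M) < (real S + 1) * Q" "Q \<le> tally M c"
  shows "0 < pile_size M c" "0 \<le> (tally M c - Q) / real (pile_size M c)"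
    "(tally M c - Q) / real (pile_size M c) \<le> real S / (real S + 1)"
proof -
  have n: "tally M c \<le> real (pile_size M c)" "real (pile_size M c) \<le> real (size M)"
    using tally_le_pile_size[OF assms(1)] pile_size_le_size[of M c] by auto
  then show "0 < pile_size M c" using assms(2,4) by linarith
  then show "0 \<le> (tally M c - Q) / real (pile_size M c)" using assms(4) by simp
  have "(tally M c - Q) * (real S + 1) \<le> real S * real (pile_size M c)"
  proof -
    have "real S * tally M c \<le> real S * real (pile_size M c)" using n(1) by (simp add: mult_left_mono)
    then show ?thesis using n assms(3) by (simp add: algebra_simps)
  qed
  with \<open>0 < pile_size M c\<close> show "(tally M c - Q) / real (pile_size M c) \<le> real S / (real S + 1)"
    by (simp add: divide_simps mult.commute)
qed

definition count_invariant :: "'c set \<Rightarrow> 'c list multiset \<Rightarrow> nat \<Rightarrow> 'c stv_state \<Rightarrow> bool" where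
  "count_invariant C B S s \<longleftrightarrow> image_mset fst (piles s) = B \<and>
     (\<forall>r\<in>#piles s. record_ok S (eligible C s) (seated s) r) \<and>
     seated s \<subseteq> C \<and> seated s \<inter> elim s = {} \<and>
     total_value (piles s) + real (quota B S) * real (card (seated s)) \<le> real (size B)"

abbreviation stv_reachable :: "'c set \<Rightarrow> 'c list multiset \<Rightarrow> nat \<Rightarrow> 'c stv_state \<Rightarrow> bool" where
  "stv_reachable C B S \<equiv> (stv_step C (real (quota B S)) S)\<^sup>*\<^sup>* (initial_state B)"

lemma eligible_seat_step [simp]: "eligible C (St (seated s \<union> X) (elim s) M) = eligible C s - X"
  unfolding eligible_def by auto

lemma eligible_elim_step [simp]: "eligible C (St (seated s) (insert e (elim s)) M) = eligible C s - {e}"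
  unfolding eligible_def by auto

lemma fst_seat_transfer [simp]: "image_mset fst (seat_transfer E' X Q M) = image_mset fst M"
  unfolding seat_transfer_def multiset.map_comp o_def
  by (intro image_mset_cong) (auto split: option.splits)

lemma fst_elim_transfer [simp]: "image_mset fst (elim_transfer E' e M) = image_mset fst M"
  unfolding elim_transfer_def multiset.map_comp o_def by (intro image_mset_cong) auto

lemma total_value_elim_transfer [simp]: "total_value (elim_transfer E' e M) = total_value M"
  unfolding total_value_def elim_transfer_def multiset.map_comp o_def
  by (intro arg_cong[where f = sum_mset] image_mset_cong) auto

lemma total_value_seat_transfer:
  assumes "finite X" "\<forall>c\<in>X. 0 < pile_size M c"
  shows "total_value (seat_transfer E' X Q M) = total_value M - Q * real (card X)"
proof -
  define t where "t c = (tally M c - Q) / real (pile_size M c)" for c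
  have "total_value (seat_transfer E' X Q M)
      = sum_mset (image_mset (\<lambda>(\<beta>, v, p). if p \<in> Some ` X then t (the p) else v) M)"
    unfolding total_value_def seat_transfer_def multiset.map_comp o_def t_def
    by (intro arg_cong[where f = sum_mset] image_mset_cong) (auto split: option.splits)
  also have "\<dots> = total_value M + (\<Sum>c\<in>X. real (pile_size M c) * t c - tally M c)"
    by (rule total_value_revalue[OF assms(1)])
  also have "(\<Sum>c\<in>X. real (pile_size M c) * t c - tally M c) = (\<Sum>c\<in>X. - Q)"
    using assms(2) by (intro sum.cong) (auto simp: t_def)
  finally show ?thesis by simp
qed

lemma seat_transfer_records_ok:
  assumes ok: "\<forall>r\<in>#M. record_ok S E Se r" and "X \<subseteq> E"
    and tv: "\<And>c. c \<in> X \<Longrightarrow> 0 \<le> (tally M c - Q) / real (pile_size M c) \<and>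
                         (tally M c - Q) / real (pile_size M c) \<le> real S / (real S + 1)"
  shows "\<forall>r\<in>#seat_transfer (E - X) X Q M. record_ok S (E - X) (Se \<union> X) r"
proof -
  have "record_ok S (E - X) (Se \<union> X) (\<beta>, (tally M c - Q) / real (pile_size M c), next_pref (E - X) \<beta> c)"
    if "(\<beta>, v, Some c) \<in># M" "c \<in> X" for \<beta> v c
    by (rule record_ok_seat_moved[of S E Se \<beta> v]) (use that ok tv in auto)
  moreover have "record_ok S (E - X) (Se \<union> X) (\<beta>, v, p)"
    if "(\<beta>, v, p) \<in># M" "\<forall>c\<in>X. p \<noteq> Some c" for \<beta> v p
    by (rule record_ok_unmoved[of S E Se]) (use that ok assms(2) in auto)
  ultimately show ?thesis unfolding seat_transfer_def by (force split: option.splits)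
qed

lemma elim_transfer_records_ok:
  assumes ok: "\<forall>r\<in>#M. record_ok S E Se r"
  shows "\<forall>r\<in>#elim_transfer (E - {e}) e M. record_ok S (E - {e}) Se r"
proof -
  have "record_ok S (E - {e}) Se (\<beta>, v, next_pref (E - {e}) \<beta> e)" if "(\<beta>, v, Some e) \<in># M" for \<beta> v
    by (rule record_ok_elim_moved[of S E Se \<beta> v]) (use that ok in auto)
  moreover have "record_ok S (E - {e}) Se (\<beta>, v, p)" if "(\<beta>, v, p) \<in># M" "p \<noteq> Some e" for \<beta> v p
    by (rule record_ok_unmoved[of S E Se]) (use that ok in auto)
  ultimately show ?thesis unfolding elim_transfer_def by auto
qed

lemma count_invariant_initial:
  assumes "valid_ballots C B"
  shows "count_invariant C B S (initial_state B)"
proof -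
  have "eligible C (initial_state B) = C" unfolding eligible_def initial_state_def by simp
  moreover have "record_ok S C {} (\<beta>, 1, first \<beta>)" if "\<beta> \<in># B" for \<beta>
    using assms that first_eq_find unfolding valid_ballots_def record_ok_def by fastforce
  moreover have "total_value (image_mset (\<lambda>\<beta>. (\<beta>, 1, first \<beta>)) B) = real (size B)"
    by (induction B) auto
  ultimately show ?thesis
    unfolding count_invariant_def by (simp add: initial_state_def multiset.map_comp o_def)
qed

lemma count_invariant_seat:
  assumes "finite C" and inv: "count_invariant C B S s"
    and X: "X = {c \<in> eligible C s. real (quota B S) \<le> tally (piles s) c}"
  shows "count_invariant C B S
           (St (seated s \<union> X) (elim s) (seat_transfer (eligible C s - X) X (real (quota B S)) (piles s)))"
proof -
  have XE: "X \<subseteq> eligible C s" using X by auto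
  have "finite X" by (rule finite_subset[OF _ assms(1)]) (use XE in \<open>auto simp: eligible_def\<close>)
  have v1: "\<forall>(\<beta>, v, p)\<in>#piles s. v \<le> 1" using inv by (auto simp: count_invariant_def record_ok_def)
  have "size (piles s) = size B" using inv by (metis count_invariant_def size_image_mset)
  then have size: "real (size (piles s)) < (real S + 1) * real (quota B S)" using quota_bounds(2) by simp
  have tv: "0 < pile_size (piles s) c \<and>
      0 \<le> (tally (piles s) c - real (quota B S)) / real (pile_size (piles s) c) \<and>
      (tally (piles s) c - real (quota B S)) / real (pile_size (piles s) c) \<le> real S / (real S + 1)"
    if "c \<in> X" for c
  proof -
    have "real (quota B S) \<le> tally (piles s) c" using that X by simp
    from transfer_value_bounds[OF v1 quota_bounds(1) size this] show ?thesis by simp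
  qed
  have "finite (seated s)" "seated s \<inter> X = {}" "X \<inter> elim s = {}" "X \<subseteq> C"
    using inv XE assms(1) by (auto simp: count_invariant_def eligible_def intro: finite_subset)
  then have "card (seated s \<union> X) = card (seated s) + card X"
    using \<open>finite X\<close> by (intro card_Un_disjoint)
  moreover have "total_value (seat_transfer (eligible C s - X) X (real (quota B S)) (piles s))
      = total_value (piles s) - real (quota B S) * real (card X)"
    using tv \<open>finite X\<close> by (intro total_value_seat_transfer) auto
  moreover have "\<forall>r\<in>#seat_transfer (eligible C s - X) X (real (quota B S)) (piles s).
      record_ok S (eligible C s - X) (seated s \<union> X) r"
    using inv XE tv by (intro seat_transfer_records_ok) (auto simp: count_invariant_def)
  ultimately show ?thesis
    using inv \<open>X \<inter> elim s = {}\<close> \<open>X \<subseteq> C\<close> unfolding count_invariant_def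
    by (auto simp: algebra_simps)
qed

lemma count_invariant_elim:
  assumes inv: "count_invariant C B S s" and e: "e \<in> eligible C s"
  shows "count_invariant C B S
           (St (seated s) (elim s \<union> {e}) (elim_transfer (eligible C s - {e}) e (piles s)))"
proof -
  have "\<forall>r\<in>#elim_transfer (eligible C s - {e}) e (piles s). record_ok S (eligible C s - {e}) (seated s) r"
    using inv by (intro elim_transfer_records_ok) (simp add: count_invariant_def)
  moreover have "e \<notin> seated s" using e by (simp add: eligible_def)
  ultimately show ?thesis using inv unfolding count_invariant_def by auto
qed

lemma count_invariant_reachable:
  assumes "stv_reachable C B S s" "finite C" "valid_ballots C B"
  shows "count_invariant C B S s"
  using assms(1)
proof (induction rule: rtranclp_induct)
  case base
  show ?case using count_invariant_initial[OF assms(3)] .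
next
  case (step s s')
  from step.hyps(2) show ?case
  proof (cases rule: stv_step.cases)
    case (seat X)
    from count_invariant_seat[OF assms(2) step.IH \<open>X = _\<close>] show ?thesis
      unfolding \<open>s' = _\<close> .
  next
    case (elim e)
    from count_invariant_elim[OF step.IH \<open>e \<in> eligible C s\<close>] show ?thesis
      unfolding \<open>s' = _\<close> .
  qed
qed

lemma stv_step_mono:
  "stv_step C Q S s s' \<Longrightarrow> seated s \<subseteq> seated s' \<and> elim s \<subseteq> elim s'"
  by (erule stv_step.cases) auto

section \<open>Tally bounds from the assertions\<close>

lemma count_invariant_record:
  "count_invariant C B S s \<Longrightarrow> r \<in># piles s \<Longrightarrow> record_ok S (eligible C s) (seated s) r"
  unfolding count_invariant_def by blast

lemma count_invariant_value_bounds: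
  "count_invariant C B S s \<Longrightarrow> (\<beta>, v, p) \<in># piles s \<Longrightarrow> 0 \<le> v \<and> v \<le> 1"
  by (drule (1) count_invariant_record) (simp add: record_ok_def)

lemma count_invariant_ballot_subset:
  assumes "count_invariant C B S s" "valid_ballots C B" "(\<beta>, v, p) \<in># piles s"
  shows "set \<beta> \<subseteq> C"
proof -
  have "\<beta> \<in># B" using assms(1,3) unfolding count_invariant_def by force
  with assms(2) show ?thesis unfolding valid_ballots_def by blast
qed

lemma L_basic_le_tally:
  assumes inv: "count_invariant C B S s" and x: "x \<in> eligible C s"
  shows "real (L_basic B x) \<le> tally (piles s) x"
proof -
  have "p = Some x \<and> v = 1" if "(\<beta>, v, p) \<in># piles s" "first \<beta> = Some x" for \<beta> v p
    using record_ok_first_eligible[OF count_invariant_record[OF inv that(1)] that(2) x] .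
  then have "real (size (filter_mset (\<lambda>\<beta>. first \<beta> = Some x) (image_mset fst (piles s))))
      \<le> tally (piles s) x"
    using count_invariant_value_bounds[OF inv] by (intro count_le_tally) auto
  then show ?thesis using inv unfolding L_basic_def count_invariant_def by simp
qed

lemma tally_le_U_comp:
  assumes inv: "count_invariant C B S s" and x: "x \<in> eligible C s"
  shows "tally (piles s) y \<le> real (U_comp B y x)"
proof -
  let ?f = "\<lambda>\<beta>. if first (sigma {y, x} \<beta>) = Some y then 1 else 0 :: real"
  have "v \<le> ?f \<beta>" if "(\<beta>, v, Some y) \<in># piles s" for \<beta> v
    using record_ok_pile_precedes[OF count_invariant_record[OF inv that] x]
      count_invariant_value_bounds[OF inv that] by simp
  then have "tally (piles s) y \<le> sum_mset (image_mset ?f (image_mset fst (piles s)))"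
    by (intro tally_le_sum) auto
  then show ?thesis using inv unfolding U_comp_def count_invariant_def sum_mset_indicator by simp
qed

lemma AG_tally_less:
  assumes "count_invariant C B S s" "x \<in> eligible C s" "holds C B (AG x y)"
  shows "tally (piles s) y < tally (piles s) x"
  using L_basic_le_tally[OF assms(1,2)] tally_le_U_comp[OF assms(1,2), of y] assms(3) by simp

lemma Max_tau23_first:
  assumes "first \<beta> = Some x" "y \<in> set \<beta>" "y \<noteq> x"
  shows "Max (tau23 ` {v \<in> {x}. precedes v y \<beta>}) = 2 / 3"
proof -
  obtain r where \<beta>: "\<beta> = x # r" using assms(1) unfolding first_def by (cases \<beta>) auto
  with assms(2,3) obtain k where "k < length r" "r ! k = y" by (auto simp: in_set_conv_nth)
  then have "precedes x y \<beta>" unfolding precedes_def \<beta> by (intro exI[of _ 0] exI[of _ "Suc k"]) auto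
  then show ?thesis by (simp add: tau23_def)
qed

lemma u_complex_nonneg: "y \<noteq> x \<Longrightarrow> 0 \<le> u_complex y oc {x} tau23 G \<beta>"
  unfolding u_complex_def using Max_tau23_first[of \<beta> x y] by auto

lemma record_ok_le_u_complex:
  assumes ok: "record_ok 2 E Se (\<beta>, v, Some y)" and "oc \<in> E" "x \<in> E \<union> Se" "G \<subseteq> {x}" "y \<noteq> x" "y \<noteq> oc"
  shows "v \<le> u_complex y oc {x} tau23 G \<beta>"
proof -
  have "find (\<lambda>z. z \<in> E) \<beta> = Some y" using ok unfolding record_ok_def by simp
  then obtain pre post where "\<beta> = pre @ y # post" using find_Some_split by metis
  then have y: "y \<in> set \<beta>" by simp
  have "first (sigma {oc, y} \<beta>) = Some y"
    using record_ok_pile_precedes[OF ok \<open>oc \<in> E\<close>] by (simp add: insert_commute)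
  moreover have "\<not> (\<exists>g\<in>G - {x}. first (sigma {g, y} \<beta>) = Some g)" using \<open>G \<subseteq> {x}\<close> by auto
  ultimately have u: "u_complex y oc {x} tau23 G \<beta> =
      (if first \<beta> = Some x then Max (tau23 ` {v \<in> {x}. precedes v y \<beta>}) else 1)"
    using assms(6) y unfolding u_complex_def by simp
  show ?thesis
  proof (cases "first \<beta> = Some x")
    case True
    have "x \<notin> E" using record_ok_first_eligible[OF ok True] \<open>y \<noteq> x\<close> by auto
    with assms(3) ok True have "v \<le> 2 / 3" unfolding record_ok_def by auto
    with u True show ?thesis using Max_tau23_first[OF True y \<open>y \<noteq> x\<close>] by simp
  next
    case False
    with u ok show ?thesis unfolding record_ok_def by simp
  qed
qed

lemma tally_le_U_complex:
  assumes inv: "count_invariant C B 2 s" and "oc \<in> eligible C s" "x \<in> C" "x \<notin> elim s"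
    and "G \<subseteq> {x}" "y \<noteq> x" "y \<noteq> oc"
  shows "tally (piles s) y \<le> U_complex B y oc {x} tau23 G"
proof -
  have "x \<in> eligible C s \<union> seated s" using assms(3,4) by (auto simp: eligible_def)
  then have "v \<le> u_complex y oc {x} tau23 G \<beta>" if "(\<beta>, v, Some y) \<in># piles s" for \<beta> v
    using record_ok_le_u_complex[OF count_invariant_record[OF inv that]] assms(2,5-7) by blast
  then have "tally (piles s) y \<le> sum_mset (image_mset (u_complex y oc {x} tau23 G) (image_mset fst (piles s)))"
    using u_complex_nonneg[OF \<open>y \<noteq> x\<close>] by (intro tally_le_sum) auto
  then show ?thesis using inv unfolding U_complex_def count_invariant_def by simp
qed

lemma record_ok_L_elim:
  assumes ok: "record_ok S E Se (\<beta>, v, p)" and "set \<beta> \<subseteq> C" "oc \<in> E" "Os \<inter> Se = {}"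
    and "first (sigma (C - Os) \<beta>) = Some oc"
  shows "v = 1" "Os \<inter> E = {} \<Longrightarrow> p = Some oc"
proof -
  obtain pre post where \<beta>: "\<beta> = pre @ oc # post" "\<forall>z\<in>set pre. z \<notin> C - Os"
    using assms(5) unfolding first_sigma find_Some_split by blast
  then have pre: "set pre \<subseteq> Os" using assms(2) by auto
  have "set (takeWhile (\<lambda>z. z \<notin> E) \<beta>) \<subseteq> set pre"
    unfolding \<beta>(1) using \<open>oc \<in> E\<close> by (induction pre) auto
  with pre assms(4) ok show "v = 1" unfolding record_ok_def by auto
  assume "Os \<inter> E = {}"
  with pre \<beta>(1) \<open>oc \<in> E\<close> have "find (\<lambda>z. z \<in> E) \<beta> = Some oc"
    by (intro find_Some_split[THEN iffD2]) auto
  with ok show "p = Some oc" unfolding record_ok_def by simp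
qed

lemma L_elim_le_tally:
  assumes inv: "count_invariant C B S s" and "valid_ballots C B" "oc \<in> eligible C s"
    and "Os \<inter> seated s = {}" "Os \<inter> eligible C s = {}"
  shows "real (L_elim C B oc Os) \<le> tally (piles s) oc"
proof -
  have "p = Some oc \<and> v = 1"
    if "(\<beta>, v, p) \<in># piles s" "first (sigma (C - Os) \<beta>) = Some oc" for \<beta> v p
    using record_ok_L_elim[OF count_invariant_record[OF inv that(1)]
        count_invariant_ballot_subset[OF inv assms(2) that(1)]] assms(3-5) that(2) by blast
  then have "real (size (filter_mset (\<lambda>\<beta>. first (sigma (C - Os) \<beta>) = Some oc) (image_mset fst (piles s))))
      \<le> tally (piles s) oc"
    using count_invariant_value_bounds[OF inv] by (intro count_le_tally) auto
  then show ?thesis using inv unfolding L_elim_def count_invariant_def by simp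
qed

lemma L_elim_le_total_value:
  assumes inv: "count_invariant C B S s" and "valid_ballots C B" "oc \<in> eligible C s"
    and "Os \<inter> seated s = {}"
  shows "real (L_elim C B oc Os) \<le> total_value (piles s)"
proof -
  have "v = 1" if "(\<beta>, v, p) \<in># piles s" "first (sigma (C - Os) \<beta>) = Some oc" for \<beta> v p
    using record_ok_L_elim[OF count_invariant_record[OF inv that(1)]
        count_invariant_ballot_subset[OF inv assms(2) that(1)]] assms(3,4) that(2) by blast
  then have "real (size (filter_mset (\<lambda>\<beta>. first (sigma (C - Os) \<beta>) = Some oc) (image_mset fst (piles s))))
      \<le> total_value (piles s)"
    using count_invariant_value_bounds[OF inv] by (intro count_le_total_value) auto
  then show ?thesis using inv unfolding L_elim_def count_invariant_def by simp
qed

lemma L_elim_le_tally_of_weakest: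
  assumes inv: "count_invariant C B S s" and "valid_ballots C B" and oc: "oc \<in> eligible C s"
    and weakest: "\<forall>c\<in>eligible C s. tally (piles s) oc \<le> tally (piles s) c"
    and AG: "\<forall>o'\<in>Os. holds C B (AG oc o')" and "Os \<inter> seated s = {}"
  shows "real (L_elim C B oc Os) \<le> tally (piles s) oc"
proof (rule L_elim_le_tally[OF inv assms(2) oc \<open>Os \<inter> seated s = {}\<close>])
  show "Os \<inter> eligible C s = {}"
    using AG_tally_less[OF inv oc] AG weakest by (meson disjoint_iff not_less)
qed

section \<open>Consequences along a run of the count\<close>

lemma AG_order_reachable:
  assumes "stv_reachable C B S s" "finite C" "valid_ballots C B" and AG: "holds C B (AG x y)" and "x \<in> C"
  shows "(y \<in> eligible C s \<longrightarrow> x \<notin> elim s) \<and> (y \<in> seated s \<longrightarrow> x \<in> seated s)"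
  using assms(1)
proof (induction rule: rtranclp_induct)
  case base
  show ?case by (simp add: initial_state_def)
next
  case (step s s')
  have less: "tally (piles s) y < tally (piles s) x" if "x \<in> eligible C s"
    using AG_tally_less[OF count_invariant_reachable[OF step.hyps(1) assms(2,3)] that AG] .
  from step.hyps(2) show ?case
  proof (cases rule: stv_step.cases)
    case (seat X)
    have "x \<in> seated s \<union> X" if "y \<in> X"
    proof -
      from that seat have "y \<in> eligible C s" "real (quota B S) \<le> tally (piles s) y" by auto
      with step.IH assms(5) have "x \<in> seated s \<or> x \<in> eligible C s" by (auto simp: eligible_def)
      with less \<open>real (quota B S) \<le> tally (piles s) y\<close> seat(3) show ?thesis by fastforce
    qed
    with step.IH show ?thesis unfolding seat(1) by auto
  next
    case (elim e)
    have "x \<noteq> e" if "y \<in> eligible C s"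
      using less elim(4,5) that by (metis not_less)
    with step.IH show ?thesis unfolding elim(1) by auto
  qed
qed

definition final_seats :: "'c set \<Rightarrow> nat \<Rightarrow> 'c stv_state \<Rightarrow> 'c set" where
  "final_seats C S s = (if S \<le> card (seated s) then seated s else seated s \<union> eligible C s)"

lemma stv_resultE:
  assumes "stv_result C B S W"
  obtains s where "stv_reachable C B S s" "W = final_seats C S s"
  using assms unfolding stv_result_def final_seats_def by blast

lemma final_seats_bounds:
  assumes "count_invariant C B S s"
  shows "seated s \<subseteq> final_seats C S s" "final_seats C S s \<subseteq> C" "final_seats C S s \<inter> elim s = {}"
  using assms unfolding count_invariant_def final_seats_def eligible_def by auto

lemma final_seats_AG_closed:
  assumes "stv_reachable C B S s" "finite C" "valid_ballots C B" "holds C B (AG x y)" "x \<in> C"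
    and "y \<in> final_seats C S s"
  shows "x \<in> final_seats C S s"
  using AG_order_reachable[OF assms(1-5)] assms(5,6) unfolding final_seats_def eligible_def
  by (auto split: if_splits)

text \<open>The hypotheses of each implication are inherited by earlier states of a run, so it suffices
  to know them for the final state.\<close>

lemma NL_reachable:
  assumes "stv_reachable C B 2 s" "finite C" "valid_ballots C B"
    and NL: "U_complex B y oc {x} tau23 G < real (L_elim C B oc Os)"
    and AG: "\<forall>o'\<in>Os. holds C B (AG oc o')"
    and "G \<subseteq> {x}" "x \<in> C" "y \<in> C" "oc \<in> C" "y \<noteq> x" "y \<noteq> oc"
  shows "oc \<notin> seated s \<longrightarrow> x \<notin> elim s \<longrightarrow> y \<notin> elim s \<longrightarrow> Os \<inter> seated s = {} \<longrightarrow>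
    oc \<notin> elim s \<and> (y \<in> seated s \<longrightarrow> real (quota B 2) < real (L_elim C B oc Os))"
  using assms(1)
proof (induction rule: rtranclp_induct)
  case base
  show ?case by (simp add: initial_state_def)
next
  case (step s s')
  let ?Q = "real (quota B 2)" and ?L = "real (L_elim C B oc Os)"
  show ?case
  proof (intro impI)
    assume "oc \<notin> seated s'" "x \<notin> elim s'" "y \<notin> elim s'" "Os \<inter> seated s' = {}"
    with stv_step_mono[OF step.hyps(2)]
    have s: "oc \<notin> seated s" "x \<notin> elim s" "y \<notin> elim s" "Os \<inter> seated s = {}" by auto
    with step.IH have IH: "oc \<notin> elim s" "y \<in> seated s \<Longrightarrow> ?Q < ?L" by auto
    have inv: "count_invariant C B 2 s" using count_invariant_reachable[OF step.hyps(1) assms(2,3)] .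
    have oc: "oc \<in> eligible C s" using IH(1) s(1) assms(9) by (simp add: eligible_def)
    have U: "tally (piles s) y < ?L"
      using tally_le_U_complex[OF inv oc assms(7) s(2) assms(6,10,11)] NL by simp
    from step.hyps(2) show "oc \<notin> elim s' \<and> (y \<in> seated s' \<longrightarrow> ?Q < ?L)"
    proof (cases rule: stv_step.cases)
      case (seat X)
      have "?Q < ?L" if "y \<in> X" using that seat(3) U by auto
      with IH show ?thesis unfolding seat(1) by auto
    next
      case (elim e)
      have "e \<noteq> oc"
      proof
        assume "e = oc"
        with elim(5) have "?L \<le> tally (piles s) oc"
          using L_elim_le_tally_of_weakest[OF inv assms(3) oc _ AG s(4)] by simp
        moreover have "y \<in> eligible C s \<or> y \<in> seated s" using s(3) assms(8) by (auto simp: eligible_def)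
        ultimately show False
          using elim(3,5) \<open>e = oc\<close> oc U IH(2) by fastforce
      qed
      with IH show ?thesis unfolding elim(1) by auto
    qed
  qed
qed

section \<open>Soundness of the assertion set\<close>

lemma NL_excludes_final_pair:
  assumes reach: "stv_reachable C B 2 f" and "finite C" "valid_ballots C B"
    and W: "final_seats C 2 f = {x, y}" and "x \<noteq> y" "oc \<in> C" "oc \<notin> {x, y}"
    and NL: "U_complex B y oc {x} tau23 G < real (L_elim C B oc Os)"
    and AG_oc: "\<forall>o'\<in>Os. holds C B (AG oc o')"
    and AG_y: "\<forall>g\<in>G. holds C B (AG g y) \<and> g \<in> C \<and> g \<noteq> y"
  shows False
proof -
  define Q where "Q = real (quota B 2)"
  define L where "L = real (L_elim C B oc Os)"
  note AG_closed = final_seats_AG_closed[OF reach assms(2,3)]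
  have inv: "count_invariant C B 2 f" using count_invariant_reachable[OF reach assms(2,3)] .
  note bounds = final_seats_bounds[OF inv, unfolded W]
  have "G \<subseteq> {x}" using AG_closed[of _ y] AG_y W by fastforce
  have "Os \<inter> seated f = {}" using AG_closed[of oc] AG_oc bounds(1) W assms(6,7) by blast
  have "x \<in> C" "y \<in> C" "oc \<notin> seated f" "x \<notin> elim f" "y \<notin> elim f"
    using bounds assms(7) by auto
  with NL_reachable[OF reach assms(2,3) NL AG_oc \<open>G \<subseteq> {x}\<close>] \<open>Os \<inter> seated f = {}\<close> assms(5,6,7)
  have "oc \<notin> elim f" and QL: "y \<in> seated f \<Longrightarrow> Q < L" unfolding Q_def L_def by auto
  then have oc: "oc \<in> eligible C f" using \<open>oc \<notin> seated f\<close> assms(6) by (simp add: eligible_def)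
  show False
  proof (cases "2 \<le> card (seated f)")
    case True
    then have "seated f = {x, y}" using W unfolding final_seats_def by simp
    then have "Q < L" "card (seated f) = 2" using QL \<open>x \<noteq> y\<close> by auto
    moreover have "L \<le> total_value (piles f)"
      using L_elim_le_total_value[OF inv assms(3) oc \<open>Os \<inter> seated f = {}\<close>] unfolding L_def .
    moreover have "total_value (piles f) + Q * real (card (seated f)) \<le> real (size B)"
      using inv unfolding count_invariant_def Q_def by simp
    moreover have "real (size B) < 3 * Q" using quota_bounds(2)[of B 2] unfolding Q_def by simp
    ultimately show False by simp
  next
    case False
    then have "oc \<in> final_seats C 2 f" using oc unfolding final_seats_def by simp
    with W assms(7) show False by simp
  qed
qed

lemma NW_choice_excludes_result:
  assumes reach: "stv_reachable C B S f" and "finite C" "valid_ballots C B"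
    and "c \<in> final_seats C S f" "ch \<in> NW_choices C R c" "\<forall>a\<in>ch. holds C B a"
  shows "3 \<le> card (final_seats C S f)"
proof -
  obtain x1 x2 where ch: "ch = {AG x1 c, AG x2 c}" "x1 \<noteq> x2" "(x1, c) \<in> AG_rec C R" "(x2, c) \<in> AG_rec C R"
    using assms(5) unfolding NW_choices_def by blast
  then have "{x1, x2, c} \<subseteq> final_seats C S f"
    using final_seats_AG_closed[OF reach assms(2,3)] assms(4,6) unfolding AG_rec_def by auto
  moreover have "finite (final_seats C S f)"
    using final_seats_bounds(2)[OF count_invariant_reachable[OF reach assms(2,3)]] assms(2)
    by (rule finite_subset)
  moreover have "card {x1, x2, c} = 3" using ch unfolding AG_rec_def by auto
  ultimately show ?thesis by (metis card_mono)
qed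

lemma pair_choice_excludes_result:
  assumes reach: "stv_reachable C B 2 f" and "finite C" "valid_ballots C B"
    and W: "final_seats C 2 f = P" and "ch \<in> pair_choices C R P" "\<forall>a\<in>ch. holds C B a"
    and "card P = 2"
  shows False
proof -
  obtain oc x y where ch: "ch = {NL oc y {x} tau23 (G_set C R y) (O_set C R oc - {x})}
        \<union> {AG oc o' | o'. o' \<in> O_set C R oc} \<union> {AG g y | g. g \<in> G_set C R y}"
    and xy: "x \<in> P" "y \<in> P" "x \<noteq> y" and oc: "oc \<in> C - P"
    using assms(5) unfolding pair_choices_def by blast
  have "P = {x, y}" using xy \<open>card P = 2\<close> by (metis card_2_iff doubleton_eq_iff insertE singletonD)
  show False
  proof (rule NL_excludes_final_pair[OF reach assms(2,3)])
    show "final_seats C 2 f = {x, y}" using W \<open>P = {x, y}\<close> by simp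
    show "U_complex B y oc {x} tau23 (G_set C R y) < real (L_elim C B oc (O_set C R oc - {x}))"
      using assms(6) ch by simp
    show "\<forall>o'\<in>O_set C R oc - {x}. holds C B (AG oc o')" using assms(6) ch by blast
    show "\<forall>g\<in>G_set C R y. holds C B (AG g y) \<and> g \<in> C \<and> g \<noteq> y"
      using assms(6) ch unfolding G_set_def AG_rec_def by blast
  qed (use xy oc \<open>P = {x, y}\<close> in auto)
qed

theorem theorem1:
  fixes C :: "'c set" and B R :: "'c list multiset" and w1 w2 :: 'c
    and cost :: "'c assertion set \<Rightarrow> real" and A :: "'c assertion set" and W :: "'c set"
  assumes "finite C"
    and "valid_ballots C B"
    and "w1 \<in> C" and "w2 \<in> C" and "w1 \<noteq> w2"
    and "find_auditable_assertions C R w1 w2 cost A"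
    and "\<forall>a \<in> A. holds C B a"
    and "stv_result C B 2 W"
  shows "\<forall>c1 c2. c1 \<in> C \<and> c2 \<in> C \<and> c1 \<noteq> c2 \<and> {c1, c2} \<noteq> {w1, w2} \<longrightarrow> W \<noteq> {c1, c2}"
proof (intro allI impI notI)
  fix c1 c2
  assume c: "c1 \<in> C \<and> c2 \<in> C \<and> c1 \<noteq> c2 \<and> {c1, c2} \<noteq> {w1, w2}" and W: "W = {c1, c2}"
  obtain f where reach: "stv_reachable C B 2 f" and Wf: "W = final_seats C 2 f"
    using assms(8) by (rule stv_resultE)
  obtain chNW chP where
    chNW: "\<forall>c \<in> NW C R. chNW c \<in> NW_choices C R c" and
    chP: "\<forall>P \<in> pairs_to_check C R w1 w2. chP P \<in> pair_choices C R P" and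
    A: "A = (\<Union>c \<in> NW C R. chNW c) \<union> (\<Union>P \<in> pairs_to_check C R w1 w2. chP P)"
    using assms(6) unfolding find_auditable_assertions_def by blast
  have card: "card W = 2" using W c by simp
  show False
  proof (cases "{c1, c2} \<inter> NW C R = {}")
    case True
    with c have P: "{c1, c2} \<in> pairs_to_check C R w1 w2" unfolding pairs_to_check_def by blast
    show False
    proof (rule pair_choice_excludes_result[OF reach assms(1,2) _ chP[rule_format, OF P]])
      show "\<forall>a\<in>chP {c1, c2}. holds C B a" using assms(7) A P by blast
    qed (use W Wf card in auto)
  next
    case False
    then obtain c where "c \<in> W" "c \<in> NW C R" using W by blast
    have "\<forall>a\<in>chNW c. holds C B a" using assms(7) A \<open>c \<in> NW C R\<close> by blast
    with chNW \<open>c \<in> NW C R\<close> \<open>c \<in> W\<close> have "3 \<le> card W"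
      unfolding Wf by (intro NW_choice_excludes_result[OF reach assms(1,2)]) auto
    with card show False by simp
  qed
qed

end
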